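(* Let $p,q\in\Bbbk^\times$. If $B(q)\cong B(p)$, then $p=q$.
   Context: $\Bbbk$ is an algebraically closed field of characteristic zero. Paths are written left to right. Let $Q$ be the quiver with vertices $e_1,e_2$, a loop $a$ at $e_1$, a loop $c$ at $e_2$, and arrows $b:e_1\to e_2$, $d:e_2\to e_1$; for $q\in\Bbbk^\times$, $B(q)=\Bbbk Q/(ab-bc,\ cd-q\,da)$. *)

theory Defs
  imports "HOL-Algebra.QuotRing"
begin

section \<open>The quiver Q and its path algebra kQ (paths composed left to right)\<close>

datatype vert = V1 | V2
datatype arr = Aa | Bb | Cc | Dd

fun src :: "arr \<Rightarrow> vert" where
  "src Aa = V1" | "src Bb = V1" | "src Cc = V2" | "src Dd = V2"

fun tgt :: "arr \<Rightarrow> vert" where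
  "tgt Aa = V1" | "tgt Bb = V2" | "tgt Cc = V2" | "tgt Dd = V1"

text \<open>A path is a start vertex together with a (possibly empty) list of arrows;
  the empty list at vertex v is the trivial path e_v.\<close>
type_synonym path = "vert \<times> arr list"

fun valid_path :: "vert \<Rightarrow> arr list \<Rightarrow> bool" where
  "valid_path v [] = True"
| "valid_path v (x # xs) = (src x = v \<and> valid_path (tgt x) xs)"

fun end_vert :: "vert \<Rightarrow> arr list \<Rightarrow> vert" where
  "end_vert v [] = v"
| "end_vert v (x # xs) = end_vert (tgt x) xs"

definition kq_carrier :: "(path \<Rightarrow> 'a::field) set" where
  "kq_carrier = {x. finite {p. x p \<noteq> 0} \<and> (\<forall>v as. x (v, as) \<noteq> 0 \<longrightarrow> valid_path v as)}"

text \<open>Multiplication: concatenation of paths (zero if not composable), extended bilinearly.\<close>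
definition pmul :: "(path \<Rightarrow> 'a::field) \<Rightarrow> (path \<Rightarrow> 'a) \<Rightarrow> path \<Rightarrow> 'a" where
  "pmul x y = (\<lambda>(v, cs). \<Sum>i\<in>{0..length cs}.
      x (v, take i cs) * y (end_vert v (take i cs), drop i cs))"

definition pone :: "path \<Rightarrow> 'a::field" where
  "pone = (\<lambda>(v, cs). if cs = [] then 1 else 0)"

definition path_alg :: "(path \<Rightarrow> 'a::field) ring" where
  "path_alg = \<lparr>carrier = kq_carrier, mult = pmul, one = pone,
               zero = (\<lambda>_. 0), add = (\<lambda>x y p. x p + y p)\<rparr>"

definition basis_path :: "vert \<Rightarrow> arr list \<Rightarrow> path \<Rightarrow> 'a::field" where
  "basis_path v as = (\<lambda>p. if p = (v, as) then 1 else 0)"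

definition scal :: "'a::field \<Rightarrow> (path \<Rightarrow> 'a) \<Rightarrow> path \<Rightarrow> 'a" where
  "scal c x = (\<lambda>p. c * x p)"

definition rel_ideal :: "'a::field \<Rightarrow> (path \<Rightarrow> 'a) set" where
  "rel_ideal q = genideal path_alg
     { (\<lambda>p. basis_path V1 [Aa, Bb] p - basis_path V1 [Bb, Cc] p),
       (\<lambda>p. basis_path V2 [Cc, Dd] p - q * basis_path V2 [Dd, Aa] p) }"

definition B_alg :: "'a::field \<Rightarrow> (path \<Rightarrow> 'a) set ring" where
  "B_alg q = path_alg Quot (rel_ideal q)"

text \<open>Isomorphism of k-algebras: a ring isomorphism commuting with the structure
  maps k \<rightarrow> B(q), c \<mapsto> class of c\<cdot>1 (hence k-linear).\<close>
definition kalg_iso :: "'a::field \<Rightarrow> 'a \<Rightarrow> bool" where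
  "kalg_iso q p \<longleftrightarrow> (\<exists>h \<in> ring_iso (B_alg q) (B_alg p).
      \<forall>c. h (rel_ideal q +>\<^bsub>path_alg\<^esub> scal c pone) = rel_ideal p +>\<^bsub>path_alg\<^esub> scal c pone)"

definition alg_closed_field :: "'a::field itself \<Rightarrow> bool" where
  "alg_closed_field _ \<longleftrightarrow> (\<forall>(n::nat) (c::nat \<Rightarrow> 'a). n > 0 \<longrightarrow>
      (\<exists>x. x ^ n + (\<Sum>i<n. c i * x ^ i) = 0))"

end

theory Submission
  imports Defs
begin

text \<open>Let S(p) be the eight-dimensional quotient of B(p) by all paths of length three and by
  aa, cc, bd, db. Composing an isomorphism B(q) \<cong> B(p) with B(p) \<rightarrow> S(p) gives a surjection
  kQ \<rightarrow> S(p) killing ab - bc and cd - q da. So the images E1, E2, A, B, C, D of e1, e2, a, b, c, d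
  generate S(p), E1 and E2 are orthogonal idempotents with sum 1, A, B, C, D lie in the matching
  corners, and AB = BC, CD = q DA. The vertex coordinates of E1 are 0 or 1. If they are equal,
  E1 or E2 is a nilpotent idempotent, hence 0, and S(p) would be generated by a single element
  and so be commutative, which it is not. Otherwise conjugation by a unit turns E1 into e1 or e2,
  and comparing coefficients in AB = BC and CD = q DA gives (p - q) A_a D_d = 0, resp.
  (p - q) A_c D_b = 0. These coefficients are nonzero, since otherwise all generators would lie
  in a proper coordinate subalgebra.\<close>

section \<open>The path algebra\<close>

lemma end_vert_append [simp]: "end_vert v (xs @ ys) = end_vert (end_vert v xs) ys"
  by (induction xs arbitrary: v) auto

lemma valid_path_append [simp]:
  "valid_path v (xs @ ys) \<longleftrightarrow> valid_path v xs \<and> valid_path (end_vert v xs) ys"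
  by (induction xs arbitrary: v) auto

lemma sum_atMost_triangle:
  fixes f :: "nat \<Rightarrow> nat \<Rightarrow> 'b::comm_monoid_add"
  shows "(\<Sum>i\<le>n. \<Sum>j\<le>i. f j i) = (\<Sum>j\<le>n. \<Sum>k\<le>n - j. f j (j + k))"
proof (induction n)
  case 0
  then show ?case by simp
next
  case (Suc n)
  have "(\<Sum>j\<le>n. \<Sum>k\<le>Suc n - j. f j (j + k)) = (\<Sum>j\<le>n. (\<Sum>k\<le>n - j. f j (j + k)) + f j (Suc n))"
  proof (rule sum.cong [OF refl])
    fix j assume "j \<in> {..n}"
    then have "Suc n - j = Suc (n - j)" by auto
    with \<open>j \<in> {..n}\<close> show "(\<Sum>k\<le>Suc n - j. f j (j + k)) = (\<Sum>k\<le>n - j. f j (j + k)) + f j (Suc n)"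
      by simp
  qed
  then show ?case using Suc by (simp add: sum.distrib add.assoc)
qed

lemma pmul_assoc: "pmul (pmul x y) z = pmul x (pmul y (z :: path \<Rightarrow> 'a::field))"
proof (rule ext, clarify)
  fix v and cs :: "arr list"
  let ?n = "length cs"
  let ?f = "\<lambda>j i. x (v, take j cs) * y (end_vert v (take j cs), drop j (take i cs))
                 * z (end_vert v (take i cs), drop i cs)"
  let ?yz = "\<lambda>j k. y (end_vert v (take j cs), take k (drop j cs))
                  * z (end_vert (end_vert v (take j cs)) (take k (drop j cs)), drop k (drop j cs))"
  have "pmul (pmul x y) z (v, cs) = (\<Sum>i\<le>?n. \<Sum>j\<le>i. ?f j i)"
    by (simp add: pmul_def atLeast0AtMost sum_distrib_right)
  also have "\<dots> = (\<Sum>j\<le>?n. \<Sum>k\<le>?n - j. ?f j (j + k))"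
    by (rule sum_atMost_triangle)
  also have "\<dots> = (\<Sum>j\<le>?n. x (v, take j cs) * (\<Sum>k\<le>?n - j. ?yz j k))"
    unfolding sum_distrib_left
  proof (intro sum.cong refl)
    fix j k
    have "drop j (take (j + k) cs) = take k (drop j cs)"
      by (simp add: take_drop add.commute)
    moreover have "take (j + k) cs = take j cs @ take k (drop j cs)"
      by (rule take_add)
    ultimately show "?f j (j + k) = x (v, take j cs) * ?yz j k"
      by (simp only: end_vert_append drop_drop add.commute mult.assoc)
  qed
  also have "\<dots> = pmul x (pmul y z) (v, cs)"
    by (simp add: pmul_def atLeast0AtMost)
  finally show "pmul (pmul x y) z (v, cs) = pmul x (pmul y z) (v, cs)" .
qed

lemma pmul_pone_left [simp]: "pmul pone y = (y :: path \<Rightarrow> 'a::field)"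
proof (rule ext, clarify)
  fix v and cs :: "arr list"
  show "pmul pone y (v, cs) = y (v, cs)"
  proof (cases cs)
    case Nil
    then show ?thesis by (simp add: pmul_def pone_def)
  next
    case (Cons a as)
    have "pmul pone y (v, cs) = (\<Sum>i\<le>Suc (length as). pone (v, take i cs) * y (end_vert v (take i cs), drop i cs))"
      by (simp add: pmul_def Cons atLeast0AtMost)
    also have "\<dots> = y (v, cs)"
      by (subst sum.atMost_Suc_shift) (simp add: pone_def Cons)
    finally show ?thesis .
  qed
qed

lemma pmul_pone_right [simp]: "pmul x pone = (x :: path \<Rightarrow> 'a::field)"
proof (rule ext, clarify)
  fix v and cs :: "arr list"
  have "pmul x pone (v, cs) = (\<Sum>i<Suc (length cs). x (v, take i cs) * pone (end_vert v (take i cs), drop i cs))"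
    by (simp add: pmul_def atLeast0AtMost lessThan_Suc_atMost)
  also have "\<dots> = x (v, cs)"
    by (simp add: pone_def)
  finally show "pmul x pone (v, cs) = x (v, cs)" .
qed

lemma pmul_nonzero_split:
  assumes "pmul x y (v, cs) \<noteq> 0"
  obtains i where "x (v, take i cs) \<noteq> 0" "y (end_vert v (take i cs), drop i cs) \<noteq> 0"
proof -
  from assms obtain i where "x (v, take i cs) * y (end_vert v (take i cs), drop i cs) \<noteq> 0"
    unfolding pmul_def by (auto elim: sum.not_neutral_contains_not_neutral)
  then show thesis by (intro that) auto
qed

lemma pmul_add_left: "pmul (\<lambda>\<pi>. x \<pi> + y \<pi>) z = (\<lambda>\<pi>. pmul x z \<pi> + pmul y z \<pi>)"
  by (rule ext, clarify) (simp add: pmul_def distrib_right sum.distrib)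

lemma pmul_add_right: "pmul z (\<lambda>\<pi>. x \<pi> + y \<pi>) = (\<lambda>\<pi>. pmul z x \<pi> + pmul z y \<pi>)"
  by (rule ext, clarify) (simp add: pmul_def distrib_left sum.distrib)

lemma scal_pmul: "pmul (scal c x) y = scal c (pmul x (y :: path \<Rightarrow> 'a::field))"
  by (rule ext, clarify) (simp add: pmul_def scal_def sum_distrib_left mult.assoc)

lemma kq_carrierI:
  assumes "finite S" and "\<And>v as. x (v, as) \<noteq> 0 \<Longrightarrow> (v, as) \<in> S \<and> valid_path v as"
  shows "x \<in> kq_carrier"
proof -
  have "{\<pi>. x \<pi> \<noteq> 0} \<subseteq> S" using assms(2) by auto
  then show ?thesis using assms unfolding kq_carrier_def by (auto intro: finite_subset)
qed

lemma kq_carrier_valid: "x \<in> kq_carrier \<Longrightarrow> x (v, as) \<noteq> 0 \<Longrightarrow> valid_path v as"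
  by (simp add: kq_carrier_def)

lemma kq_carrier_finite: "x \<in> kq_carrier \<Longrightarrow> finite {\<pi>. x \<pi> \<noteq> 0}"
  by (simp add: kq_carrier_def)

lemma pmul_closed:
  assumes x: "x \<in> kq_carrier" and y: "y \<in> kq_carrier"
  shows "pmul x y \<in> kq_carrier"
proof (rule kq_carrierI)
  let ?concat = "\<lambda>(\<pi> :: path, \<sigma> :: path). (fst \<pi>, snd \<pi> @ snd \<sigma>)"
  show "finite (?concat ` ({\<pi>. x \<pi> \<noteq> 0} \<times> {\<sigma>. y \<sigma> \<noteq> 0}))"
    using kq_carrier_finite [OF x] kq_carrier_finite [OF y] by simp
  fix v cs assume "pmul x y (v, cs) \<noteq> 0"
  then obtain i where i: "x (v, take i cs) \<noteq> 0" "y (end_vert v (take i cs), drop i cs) \<noteq> 0"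
    by (rule pmul_nonzero_split)
  then have "(v, cs) = ?concat ((v, take i cs), (end_vert v (take i cs), drop i cs))"
    by simp
  with i have "(v, cs) \<in> ?concat ` ({\<pi>. x \<pi> \<noteq> 0} \<times> {\<sigma>. y \<sigma> \<noteq> 0})"
    by blast
  moreover from i have "valid_path v (take i cs)" "valid_path (end_vert v (take i cs)) (drop i cs)"
    using kq_carrier_valid x y by blast+
  then have "valid_path v cs"
    using valid_path_append [of v "take i cs" "drop i cs"] by simp
  ultimately show "(v, cs) \<in> ?concat ` ({\<pi>. x \<pi> \<noteq> 0} \<times> {\<sigma>. y \<sigma> \<noteq> 0}) \<and> valid_path v cs"
    by blast
qed

lemma kq_diff_scal_closed:
  assumes x: "x \<in> kq_carrier" and y: "y \<in> kq_carrier"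
  shows "(\<lambda>\<pi>. x \<pi> - c * y \<pi>) \<in> kq_carrier"
proof (rule kq_carrierI)
  show "finite ({\<pi>. x \<pi> \<noteq> 0} \<union> {\<pi>. y \<pi> \<noteq> 0})"
    using kq_carrier_finite [OF x] kq_carrier_finite [OF y] by simp
  fix v as assume "x (v, as) - c * y (v, as) \<noteq> 0"
  then have "x (v, as) \<noteq> 0 \<or> y (v, as) \<noteq> 0" by auto
  then show "(v, as) \<in> {\<pi>. x \<pi> \<noteq> 0} \<union> {\<pi>. y \<pi> \<noteq> 0} \<and> valid_path v as"
    using kq_carrier_valid x y by blast
qed

lemma kq_add_closed:
  assumes "x \<in> kq_carrier" and "y \<in> kq_carrier"
  shows "(\<lambda>\<pi>. x \<pi> + y \<pi>) \<in> kq_carrier"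
  using kq_diff_scal_closed [OF assms, of "- 1"] by simp

lemma kq_uminus_closed: "x \<in> kq_carrier \<Longrightarrow> (\<lambda>\<pi>. - x \<pi>) \<in> kq_carrier"
  by (auto simp: kq_carrier_def)

lemma kq_zero_closed: "(\<lambda>_. 0) \<in> kq_carrier"
  by (simp add: kq_carrier_def)

lemma basis_path_closed: "valid_path v as \<Longrightarrow> basis_path v as \<in> kq_carrier"
  by (rule kq_carrierI [of "{(v, as)}"]) (auto simp: basis_path_def split: if_splits)

lemma pone_eq_sum_vertices: "pone = (\<lambda>\<pi>. basis_path V1 [] \<pi> + basis_path V2 [] \<pi>)"
proof (rule ext, clarify)
  fix v and cs :: "arr list"
  show "pone (v, cs) = (basis_path V1 [] (v, cs) + basis_path V2 [] (v, cs) :: 'a)"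
    by (cases v) (auto simp: pone_def basis_path_def)
qed

lemma pone_closed: "pone \<in> kq_carrier"
  unfolding pone_eq_sum_vertices by (intro kq_add_closed basis_path_closed) simp_all

lemma scal_closed: "y \<in> kq_carrier \<Longrightarrow> scal c y \<in> kq_carrier"
  using kq_diff_scal_closed [OF kq_zero_closed, of y "- c"] by (simp add: scal_def)

lemma path_alg_simps:
  "carrier path_alg = kq_carrier" "x \<otimes>\<^bsub>path_alg\<^esub> y = pmul x y" "\<one>\<^bsub>path_alg\<^esub> = pone"
  "x \<oplus>\<^bsub>path_alg\<^esub> y = (\<lambda>\<pi>. x \<pi> + y \<pi>)" "\<zero>\<^bsub>path_alg\<^esub> = (\<lambda>_. 0)"
  by (simp_all add: path_alg_def)

lemma ring_path_alg: "ring (path_alg :: (path \<Rightarrow> 'a::field) ring)"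
proof (rule ringI)
  show "abelian_group (path_alg :: (path \<Rightarrow> 'a) ring)"
  proof (rule abelian_groupI)
    fix x assume "x \<in> carrier (path_alg :: (path \<Rightarrow> 'a) ring)"
    then show "\<exists>y\<in>carrier path_alg. y \<oplus>\<^bsub>path_alg\<^esub> x = \<zero>\<^bsub>path_alg\<^esub>"
      by (intro bexI [where x = "\<lambda>\<pi>. - x \<pi>"]) (auto simp: path_alg_def kq_uminus_closed)
  qed (simp_all add: path_alg_def kq_add_closed kq_zero_closed add_ac)
  show "monoid (path_alg :: (path \<Rightarrow> 'a) ring)"
    by (rule monoidI) (simp_all add: path_alg_def pmul_closed pone_closed pmul_assoc)
qed (simp_all add: path_alg_def pmul_add_left pmul_add_right)

lemma pmul_basis_path:
  "pmul (basis_path v xs) (basis_path w ys) =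
   (if w = end_vert v xs then basis_path v (xs @ ys) else (\<lambda>_. 0 :: 'a::field))"
proof (rule ext, clarify)
  fix u and cs :: "arr list"
  let ?g = "if u = v \<and> cs = xs @ ys \<and> w = end_vert v xs then (1::'a) else 0"
  have summand: "(basis_path v xs (u, take i cs) :: 'a) * basis_path w ys (end_vert u (take i cs), drop i cs)
      = (if i = length xs then ?g else 0)" if "i \<le> length cs" for i
  proof (cases "u = v \<and> take i cs = xs \<and> end_vert u (take i cs) = w \<and> drop i cs = ys")
    case True
    then have "cs = xs @ ys" by (metis append_take_drop_id)
    moreover have "i = length xs" using True \<open>i \<le> length cs\<close> by auto
    ultimately show ?thesis using True by (auto simp: basis_path_def)
  next
    case False
    have "\<not> (i = length xs \<and> u = v \<and> cs = xs @ ys \<and> w = end_vert v xs)"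
    proof
      assume H: "i = length xs \<and> u = v \<and> cs = xs @ ys \<and> w = end_vert v xs"
      then have "take i cs = xs" "drop i cs = ys" by auto
      with False H show False by auto
    qed
    moreover have "(basis_path v xs (u, take i cs) :: 'a) * basis_path w ys (end_vert u (take i cs), drop i cs) = 0"
      using False unfolding basis_path_def by auto
    ultimately show ?thesis by auto
  qed
  have "pmul (basis_path v xs) (basis_path w ys) (u, cs) = (\<Sum>i\<in>{0..length cs}. if i = length xs then ?g else 0)"
    unfolding pmul_def by (simp add: summand)
  also have "\<dots> = ?g"
    by (auto simp: sum.delta)
  finally show "pmul (basis_path v xs) (basis_path w ys) (u, cs) =
     (if w = end_vert v xs then basis_path v (xs @ ys) else (\<lambda>_. 0 :: 'a)) (u, cs)"
    by (auto simp: basis_path_def)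
qed

lemma basis_path_induct [consumes 1, case_names vertex arrow mult]:
  fixes P :: "(path \<Rightarrow> 'a::field) \<Rightarrow> bool"
  assumes "valid_path v as"
    and vertex: "\<And>v. P (basis_path v [])"
    and arrow: "\<And>a. P (basis_path (src a) [a])"
    and mult: "\<And>x y. x \<in> kq_carrier \<Longrightarrow> y \<in> kq_carrier \<Longrightarrow> P x \<Longrightarrow> P y \<Longrightarrow> P (pmul x y)"
  shows "P (basis_path v as)"
  using assms(1)
proof (induction as arbitrary: v)
  case Nil
  show ?case by (rule vertex)
next
  case (Cons a as)
  then have v: "v = src a" and valid: "valid_path (tgt a) as" by auto
  have "P (pmul (basis_path (src a) [a]) (basis_path (tgt a) as))"
    by (rule mult [OF basis_path_closed basis_path_closed arrow Cons.IH [OF valid]]) (simp_all add: valid)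
  then show ?case
    by (simp add: pmul_basis_path v)
qed

lemma kq_carrier_induct [consumes 1, case_names scalar vertex arrow add mult]:
  fixes P :: "(path \<Rightarrow> 'a::field) \<Rightarrow> bool"
  assumes x: "x \<in> kq_carrier"
    and scalar: "\<And>c. P (scal c pone)"
    and vertex: "\<And>v. P (basis_path v [])"
    and arrow: "\<And>a. P (basis_path (src a) [a])"
    and add: "\<And>x y. x \<in> kq_carrier \<Longrightarrow> y \<in> kq_carrier \<Longrightarrow> P x \<Longrightarrow> P y \<Longrightarrow> P (\<lambda>\<pi>. x \<pi> + y \<pi>)"
    and mult: "\<And>x y. x \<in> kq_carrier \<Longrightarrow> y \<in> kq_carrier \<Longrightarrow> P x \<Longrightarrow> P y \<Longrightarrow> P (pmul x y)"
  shows "P x"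
proof -
  have "P (basis_path v as)" if "valid_path v as" for v as
    using that by (rule basis_path_induct [where P = P]) (fact vertex arrow mult)+
  then have scaled_path: "P (scal c (basis_path v as))" if "valid_path v as" for c v as
    using mult [OF scal_closed [OF pone_closed] basis_path_closed [OF that] scalar] that
    by (simp add: scal_pmul)
  let ?restrict = "\<lambda>F \<pi>. if \<pi> \<in> F then x \<pi> else 0"
  have "?restrict F \<in> kq_carrier \<and> P (?restrict F)" if "finite F" for F
    using that
  proof (induction F rule: finite_induct)
    case empty
    have "?restrict {} = scal 0 pone" by (simp add: scal_def)
    then show ?case using scalar [of 0] scal_closed [OF pone_closed, of 0] by simp
  next
    case (insert \<pi> F)
    obtain v as where \<pi>: "\<pi> = (v, as)" by (cases \<pi>)
    show ?case
    proof (cases "x \<pi> = 0")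
      case True
      then have "?restrict (insert \<pi> F) = ?restrict F" by auto
      with insert.IH show ?thesis by simp
    next
      case False
      with x \<pi> have valid: "valid_path v as" by (simp add: kq_carrier_valid)
      have split: "?restrict (insert \<pi> F) = (\<lambda>\<sigma>. ?restrict F \<sigma> + scal (x \<pi>) (basis_path v as) \<sigma>)"
        using insert.hyps(2) by (auto simp: scal_def basis_path_def \<pi>)
      have "scal (x \<pi>) (basis_path v as) \<in> kq_carrier"
        by (simp add: scal_closed basis_path_closed valid)
      then show ?thesis
        unfolding split using insert.IH by (simp add: kq_add_closed add scaled_path valid)
    qed
  qed
  moreover have "?restrict {\<pi>. x \<pi> \<noteq> 0} = x" by auto
  ultimately show ?thesis using kq_carrier_finite [OF x] by metis
qed

section \<open>The truncated algebra S(p)\<close>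

datatype sbasis = S_e1 | S_e2 | S_a | S_b | S_c | S_d | S_ab | S_da

text \<open>The basis of S(p) is e1, e2, a, b, c, d, ab = bc and da; the product cd is p da.\<close>

definition smul :: "'a::field \<Rightarrow> (sbasis \<Rightarrow> 'a) \<Rightarrow> (sbasis \<Rightarrow> 'a) \<Rightarrow> sbasis \<Rightarrow> 'a" where
  "smul p X Y = (\<lambda>i. case i of
      S_e1 \<Rightarrow> X S_e1 * Y S_e1
    | S_e2 \<Rightarrow> X S_e2 * Y S_e2
    | S_a \<Rightarrow> X S_e1 * Y S_a + X S_a * Y S_e1
    | S_b \<Rightarrow> X S_e1 * Y S_b + X S_b * Y S_e2
    | S_c \<Rightarrow> X S_e2 * Y S_c + X S_c * Y S_e2
    | S_d \<Rightarrow> X S_e2 * Y S_d + X S_d * Y S_e1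
    | S_ab \<Rightarrow> X S_e1 * Y S_ab + X S_a * Y S_b + X S_b * Y S_c + X S_ab * Y S_e2
    | S_da \<Rightarrow> X S_e2 * Y S_da + p * X S_c * Y S_d + X S_d * Y S_a + X S_da * Y S_e1)"

definition sone :: "sbasis \<Rightarrow> 'a::field" where
  "sone = (\<lambda>i. if i = S_e1 \<or> i = S_e2 then 1 else 0)"

definition szero :: "sbasis \<Rightarrow> 'a::field" where
  "szero = (\<lambda>_. 0)"

definition sadd :: "(sbasis \<Rightarrow> 'a::field) \<Rightarrow> (sbasis \<Rightarrow> 'a) \<Rightarrow> sbasis \<Rightarrow> 'a" where
  "sadd X Y = (\<lambda>i. X i + Y i)"

definition sscale :: "'a::field \<Rightarrow> (sbasis \<Rightarrow> 'a) \<Rightarrow> sbasis \<Rightarrow> 'a" where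
  "sscale c X = (\<lambda>i. c * X i)"

definition sbas :: "sbasis \<Rightarrow> sbasis \<Rightarrow> 'a::field" where
  "sbas k = (\<lambda>i. if i = k then 1 else 0)"

lemma sbasis_fun_eq_iff:
  "X = Y \<longleftrightarrow> X S_e1 = Y S_e1 \<and> X S_e2 = Y S_e2 \<and> X S_a = Y S_a \<and> X S_b = Y S_b \<and>
     X S_c = Y S_c \<and> X S_d = Y S_d \<and> X S_ab = Y S_ab \<and> X S_da = Y S_da"
  by (auto intro!: ext) (case_tac x, auto)

lemma smul_apply [simp]:
  "smul p X Y S_e1 = X S_e1 * Y S_e1"
  "smul p X Y S_e2 = X S_e2 * Y S_e2"
  "smul p X Y S_a = X S_e1 * Y S_a + X S_a * Y S_e1"
  "smul p X Y S_b = X S_e1 * Y S_b + X S_b * Y S_e2"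
  "smul p X Y S_c = X S_e2 * Y S_c + X S_c * Y S_e2"
  "smul p X Y S_d = X S_e2 * Y S_d + X S_d * Y S_e1"
  "smul p X Y S_ab = X S_e1 * Y S_ab + X S_a * Y S_b + X S_b * Y S_c + X S_ab * Y S_e2"
  "smul p X Y S_da = X S_e2 * Y S_da + p * X S_c * Y S_d + X S_d * Y S_a + X S_da * Y S_e1"
  by (simp_all add: smul_def)

lemma sone_apply [simp]:
  "sone S_e1 = 1" "sone S_e2 = 1" "sone S_a = 0" "sone S_b = 0"
  "sone S_c = 0" "sone S_d = 0" "sone S_ab = 0" "sone S_da = 0"
  by (simp_all add: sone_def)

lemma szero_apply [simp]: "szero i = 0"
  by (simp add: szero_def)

lemma sadd_apply [simp]: "sadd X Y i = X i + Y i"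
  by (simp add: sadd_def)

lemma sscale_apply [simp]: "sscale c X i = c * X i"
  by (simp add: sscale_def)

lemma sbas_apply [simp]: "sbas k i = (if i = k then 1 else 0)"
  by (simp add: sbas_def)

lemma smul_assoc: "smul p (smul p X Y) Z = smul p X (smul p Y Z)"
  by (simp add: sbasis_fun_eq_iff algebra_simps)

lemma smul_sadd_left: "smul p (sadd X Y) Z = sadd (smul p X Z) (smul p Y Z)"
  by (simp add: sbasis_fun_eq_iff algebra_simps)

lemma smul_sadd_right: "smul p Z (sadd X Y) = sadd (smul p Z X) (smul p Z Y)"
  by (simp add: sbasis_fun_eq_iff algebra_simps)

lemma smul_sscale_left: "smul p (sscale c X) Y = sscale c (smul p X Y)"
  by (simp add: sbasis_fun_eq_iff algebra_simps)

lemma smul_sscale_right: "smul p X (sscale c Y) = sscale c (smul p X Y)"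
  by (simp add: sbasis_fun_eq_iff algebra_simps)

lemma smul_sone [simp]: "smul p sone X = X" "smul p X sone = X"
  by (simp_all add: sbasis_fun_eq_iff)

lemma smul_szero [simp]: "smul p szero X = szero" "smul p X szero = szero"
  by (simp_all add: sbasis_fun_eq_iff)

lemma sadd_szero [simp]: "sadd X szero = X" "sadd szero X = X"
  by (simp_all add: sbasis_fun_eq_iff)

lemma smul_scalar_commute: "smul p (sscale c sone) X = smul p X (sscale c sone)"
  by (simp add: sbasis_fun_eq_iff)

lemma sidempotent_vertex_coords:
  assumes "smul p E E = E"
  shows "E S_e1 = 0 \<or> E S_e1 = 1" and "E S_e2 = 0 \<or> E S_e2 = 1"
  using fun_cong [OF assms, of S_e1] fun_cong [OF assms, of S_e2]
  by (metis mult_cancel_right2 mult_zero_right smul_apply(1,2))+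

text \<open>E = E E E, and a product of three elements with vanishing vertex coordinates is zero.\<close>

lemma sidempotent_radical_eq_szero:
  assumes "smul p E E = E" and "E S_e1 = 0" and "E S_e2 = 0"
  shows "E = szero"
proof -
  have "smul p (smul p E E) E = szero"
    using assms(2,3) by (simp add: sbasis_fun_eq_iff)
  with assms(1) show ?thesis by simp
qed

text \<open>u = 1 + n with n in the radical, so n ^ 3 = 0 and u\<inverse> = 1 - n + n ^ 2.\<close>

lemma sunit_exists:
  assumes "u S_e1 = 1" and "u S_e2 = 1"
  obtains v where "smul p u v = sone" and "smul p v u = sone"
proof
  let ?v = "\<lambda>i. case i of S_e1 \<Rightarrow> 1 | S_e2 \<Rightarrow> 1 | S_a \<Rightarrow> - u S_a | S_b \<Rightarrow> - u S_b
     | S_c \<Rightarrow> - u S_c | S_d \<Rightarrow> - u S_d | S_ab \<Rightarrow> - u S_ab + u S_a * u S_b + u S_b * u S_c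
     | S_da \<Rightarrow> - u S_da + p * u S_c * u S_d + u S_d * u S_a"
  show "smul p u ?v = sone" and "smul p ?v u = sone"
    using assms by (simp_all add: sbasis_fun_eq_iff algebra_simps)
qed

definition ssubalg :: "'a::field \<Rightarrow> (sbasis \<Rightarrow> 'a) set \<Rightarrow> bool" where
  "ssubalg p T \<longleftrightarrow> (\<forall>c. sscale c sone \<in> T) \<and> (\<forall>X\<in>T. \<forall>Y\<in>T. sadd X Y \<in> T \<and> smul p X Y \<in> T)"

lemma ssubalg_coord_zero:
  assumes "k \<in> {S_a, S_b, S_c, S_d}"
  shows "ssubalg p {X. X k = 0}"
  using assms unfolding ssubalg_def by auto

lemma ssubalg_centralizer: "ssubalg p {X. \<forall>Y\<in>M. smul p X Y = smul p Y X}"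
proof -
  have product: "smul p (smul p X Y) Z = smul p Z (smul p X Y)"
    if X: "smul p X Z = smul p Z X" and Y: "smul p Y Z = smul p Z Y" for X Y Z
  proof -
    have "smul p (smul p X Y) Z = smul p X (smul p Z Y)"
      using Y by (simp add: smul_assoc)
    also have "\<dots> = smul p Z (smul p X Y)"
      using X by (simp add: smul_assoc [symmetric])
    finally show ?thesis .
  qed
  then show ?thesis
    unfolding ssubalg_def by (auto simp: smul_sadd_left smul_sadd_right smul_scalar_commute)
qed

definition sconj :: "'a::field \<Rightarrow> (sbasis \<Rightarrow> 'a) \<Rightarrow> (sbasis \<Rightarrow> 'a) \<Rightarrow> (sbasis \<Rightarrow> 'a) \<Rightarrow> sbasis \<Rightarrow> 'a" where
  "sconj p u v X = smul p (smul p u X) v"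

lemma sconj_sadd: "sconj p u v (sadd X Y) = sadd (sconj p u v X) (sconj p u v Y)"
  by (simp add: sconj_def smul_sadd_left smul_sadd_right)

lemma sconj_sscale: "sconj p u v (sscale c X) = sscale c (sconj p u v X)"
  by (simp add: sconj_def smul_sscale_left smul_sscale_right)

lemma sconj_szero: "sconj p u v szero = szero"
  by (simp add: sconj_def)

lemma sconj_sone: "smul p u v = sone \<Longrightarrow> sconj p u v sone = sone"
  by (simp add: sconj_def)

lemma sconj_smul:
  assumes "smul p v u = sone"
  shows "sconj p u v (smul p X Y) = smul p (sconj p u v X) (sconj p u v Y)"
proof -
  have "smul p (sconj p u v X) (sconj p u v Y) = smul p (smul p u X) (smul p (smul p v u) (smul p Y v))"
    by (simp add: sconj_def smul_assoc)
  then show ?thesis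
    by (simp add: assms sconj_def smul_assoc)
qed

lemma sconj_inverse: "smul p u v = sone \<Longrightarrow> sconj p u v (sconj p v u X) = X"
  by (simp add: sconj_def smul_assoc) (simp add: smul_assoc [symmetric])

section \<open>Generating tuples of S(p) satisfying the relations of B(q)\<close>

locale B_generators =
  fixes p q :: "'a::field" and E1 E2 A B C D :: "sbasis \<Rightarrow> 'a"
  assumes idempotents_sum: "sadd E1 E2 = sone"
    and idempotent1: "smul p E1 E1 = E1" and idempotent2: "smul p E2 E2 = E2"
    and orthogonal12: "smul p E1 E2 = szero" and orthogonal21: "smul p E2 E1 = szero"
    and corner_A: "smul p (smul p E1 A) E1 = A" and corner_B: "smul p (smul p E1 B) E2 = B"
    and corner_C: "smul p (smul p E2 C) E2 = C" and corner_D: "smul p (smul p E2 D) E1 = D"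
    and relation_ABC: "smul p A B = smul p B C"
    and relation_CDA: "smul p C D = sscale q (smul p D A)"
    and generating: "ssubalg p T \<Longrightarrow> {E1, E2, A, B, C, D} \<subseteq> T \<Longrightarrow> Z \<in> T"
begin

lemma E2_eq_sone_minus_E1: "E2 k = sone k - E1 k"
  using fun_cong [OF idempotents_sum, of k] by (simp add: algebra_simps)

lemma sconj_B_generators:
  assumes uv: "smul p u v = sone" and vu: "smul p v u = sone"
  shows "B_generators p q (sconj p u v E1) (sconj p u v E2) (sconj p u v A) (sconj p u v B)
    (sconj p u v C) (sconj p u v D)"
proof unfold_locales
  let ?c = "sconj p u v"
  have hom: "smul p (?c X) (?c Y) = ?c (smul p X Y)" for X Y
    by (simp add: sconj_smul [OF vu])
  show "sadd (?c E1) (?c E2) = sone"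
    by (simp add: sconj_sadd [symmetric] idempotents_sum sconj_sone [OF uv])
  show "smul p (?c E1) (?c E1) = ?c E1" "smul p (?c E2) (?c E2) = ?c E2"
    "smul p (?c E1) (?c E2) = szero" "smul p (?c E2) (?c E1) = szero"
    by (simp_all add: hom idempotent1 idempotent2 orthogonal12 orthogonal21 sconj_szero)
  show "smul p (smul p (?c E1) (?c A)) (?c E1) = ?c A" "smul p (smul p (?c E1) (?c B)) (?c E2) = ?c B"
    "smul p (smul p (?c E2) (?c C)) (?c E2) = ?c C" "smul p (smul p (?c E2) (?c D)) (?c E1) = ?c D"
    by (simp_all add: hom corner_A corner_B corner_C corner_D)
  show "smul p (?c A) (?c B) = smul p (?c B) (?c C)" "smul p (?c C) (?c D) = sscale q (smul p (?c D) (?c A))"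
    by (simp_all add: hom relation_ABC relation_CDA sconj_sscale)
  fix T Z
  assume T: "ssubalg p T" and gens: "{?c E1, ?c E2, ?c A, ?c B, ?c C, ?c D} \<subseteq> T"
  have "ssubalg p {X. ?c X \<in> T}"
    using T unfolding ssubalg_def
    by (simp add: sconj_sadd sconj_smul [OF vu] sconj_sscale sconj_sone [OF uv])
  with gens have "sconj p v u Z \<in> {X. ?c X \<in> T}"
    by (intro generating) auto
  then show "Z \<in> T"
    by (simp add: sconj_inverse [OF uv])
qed

text \<open>u E1 = e E1 = e u, so conjugation by the unit u carries E1 to e.\<close>

lemma sconj_to_idempotents:
  assumes ef: "sadd e f = sone" "smul p e e = e" "smul p e f = szero"
    and u: "u = sadd (smul p e E1) (smul p f E2)" "u S_e1 = 1" "u S_e2 = 1"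
  obtains A' B' C' D' where "B_generators p q e f A' B' C' D'"
proof -
  obtain v where uv: "smul p u v = sone" and vu: "smul p v u = sone"
    using sunit_exists [OF u(2,3)] .
  interpret conj: B_generators p q "sconj p u v E1" "sconj p u v E2" "sconj p u v A" "sconj p u v B"
    "sconj p u v C" "sconj p u v D"
    by (rule sconj_B_generators [OF uv vu])
  have "smul p u E1 = smul p e E1"
    by (simp add: u(1) smul_sadd_left smul_assoc idempotent1 orthogonal21)
  moreover have "smul p e u = smul p e E1"
    by (simp add: u(1) smul_sadd_right smul_assoc [symmetric] ef(2,3))
  ultimately have E1: "sconj p u v E1 = e"
    by (metis sconj_def smul_assoc uv smul_sone(2))
  have "sconj p u v E2 = f"
  proof -
    have "sadd e (sconj p u v E2) = sadd e f"
      using conj.idempotents_sum E1 ef(1) by simp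
    then show ?thesis
      by (simp add: sbasis_fun_eq_iff)
  qed
  with E1 conj.B_generators_axioms show thesis
    by (intro that) simp
qed

text \<open>Two centralizer arguments would make S(p) commutative, but bc \<noteq> cb.\<close>

lemma not_generated_by_one_element:
  assumes gens: "{E1, E2, A, B, C, D} \<subseteq> {szero, sone, W}"
  shows False
proof -
  have "{szero, sone, W} \<subseteq> {X. \<forall>Y\<in>{W}. smul p X Y = smul p Y X}"
    by simp
  from generating [OF ssubalg_centralizer subset_trans [OF gens this]]
  have W_central: "smul p X W = smul p W X" for X
    by simp
  have "{szero, sone, W} \<subseteq> {X. \<forall>Y\<in>UNIV. smul p X Y = smul p Y X}"
    using W_central by simp
  from generating [OF ssubalg_centralizer subset_trans [OF gens this]]
  have "smul p X Y = smul p Y X" for X Y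
    by simp
  from this [of "sbas S_b" "sbas S_c"] show False
    by (simp add: sbasis_fun_eq_iff)
qed

lemma arrow_coord_nonzero:
  assumes "k \<in> {S_a, S_b, S_c, S_d}"
  shows "\<exists>X\<in>{E1, E2, A, B, C, D}. X k \<noteq> 0"
proof (rule ccontr)
  assume "\<not> ?thesis"
  then have "{E1, E2, A, B, C, D} \<subseteq> {X. X k = 0}"
    by auto
  then have "(sbas k :: sbasis \<Rightarrow> 'a) \<in> {X. X k = 0}"
    by (rule generating [OF ssubalg_coord_zero [OF assms]])
  then show False by simp
qed

end

lemma B_generators_standard_eq:
  assumes "B_generators p q (sbas S_e1) (sbas S_e2) A B C D"
  shows "p = q"
proof -
  interpret B_generators p q "sbas S_e1" "sbas S_e2" A B C D by fact
  have A0: "A k = 0" if "k \<notin> {S_e1, S_a}" for k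
    using fun_cong [OF corner_A, of k] that by (cases k) simp_all
  have B0: "B k = 0" if "k \<notin> {S_b, S_ab}" for k
    using fun_cong [OF corner_B, of k] that by (cases k) simp_all
  have C0: "C k = 0" if "k \<notin> {S_e2, S_c}" for k
    using fun_cong [OF corner_C, of k] that by (cases k) simp_all
  have D0: "D k = 0" if "k \<notin> {S_d, S_da}" for k
    using fun_cong [OF corner_D, of k] that by (cases k) simp_all
  have a: "A S_a \<noteq> 0" and b: "B S_b \<noteq> 0" and d: "D S_d \<noteq> 0"
    using arrow_coord_nonzero [of S_a] arrow_coord_nonzero [of S_b] arrow_coord_nonzero [of S_d]
    by (auto simp: A0 B0 C0 D0)
  have "A S_e1 * B S_b = B S_b * C S_e2"
    using fun_cong [OF relation_ABC, of S_b] by (simp add: A0 B0 C0)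
  then have AC: "A S_e1 = C S_e2"
    using b by simp
  have "A S_e1 * B S_ab + A S_a * B S_b = B S_b * C S_c + B S_ab * C S_e2"
    using fun_cong [OF relation_ABC, of S_ab] by (simp add: A0 B0 C0)
  then have "A S_a = C S_c"
    using b AC by (simp add: mult.commute)
  moreover have "C S_e2 * D S_d = q * (D S_d * A S_e1)"
    using fun_cong [OF relation_CDA, of S_d] by (simp add: A0 C0 D0)
  then have "C S_e2 = q * A S_e1"
    using d by (simp add: mult.commute mult.left_commute)
  moreover have "C S_e2 * D S_da + p * C S_c * D S_d = q * (D S_d * A S_a + D S_da * A S_e1)"
    using fun_cong [OF relation_CDA, of S_da] by (simp add: A0 C0 D0)
  ultimately have "p * A S_a * D S_d = q * A S_a * D S_d"
    by (simp add: algebra_simps)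
  with a d show "p = q" by simp
qed

lemma B_generators_swapped_eq:
  assumes "B_generators p q (sbas S_e2) (sbas S_e1) A B C D"
  shows "p = q"
proof -
  interpret B_generators p q "sbas S_e2" "sbas S_e1" A B C D by fact
  have A0: "A k = 0" if "k \<notin> {S_e2, S_c}" for k
    using fun_cong [OF corner_A, of k] that by (cases k) simp_all
  have B0: "B k = 0" if "k \<notin> {S_d, S_da}" for k
    using fun_cong [OF corner_B, of k] that by (cases k) simp_all
  have C0: "C k = 0" if "k \<notin> {S_e1, S_a}" for k
    using fun_cong [OF corner_C, of k] that by (cases k) simp_all
  have D0: "D k = 0" if "k \<notin> {S_b, S_ab}" for k
    using fun_cong [OF corner_D, of k] that by (cases k) simp_all
  have c: "A S_c \<noteq> 0" and d: "B S_d \<noteq> 0" and b: "D S_b \<noteq> 0"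
    using arrow_coord_nonzero [of S_c] arrow_coord_nonzero [of S_d] arrow_coord_nonzero [of S_b]
    by (auto simp: A0 B0 C0 D0)
  have "A S_e2 * B S_d = B S_d * C S_e1"
    using fun_cong [OF relation_ABC, of S_d] by (simp add: A0 B0 C0)
  then have AC: "A S_e2 = C S_e1"
    using d by simp
  have "A S_e2 * B S_da + p * A S_c * B S_d = B S_d * C S_a + B S_da * C S_e1"
    using fun_cong [OF relation_ABC, of S_da] by (simp add: A0 B0 C0)
  then have "p * A S_c = C S_a"
    using d AC by (simp add: algebra_simps)
  moreover have "C S_e1 * D S_b = q * (D S_b * A S_e2)"
    using fun_cong [OF relation_CDA, of S_b] by (simp add: A0 C0 D0)
  then have "C S_e1 = q * A S_e2"
    using b by (simp add: mult.commute mult.left_commute)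
  moreover have "C S_e1 * D S_ab + C S_a * D S_b = q * (D S_b * A S_c + D S_ab * A S_e2)"
    using fun_cong [OF relation_CDA, of S_ab] by (simp add: A0 C0 D0)
  ultimately have "p * A S_c * D S_b = q * A S_c * D S_b"
    by (simp add: algebra_simps)
  with c b show "p = q" by simp
qed

lemma (in B_generators) parameters_eq: "p = q"
proof -
  consider "E1 S_e1 = 0" "E1 S_e2 = 0" | "E1 S_e1 = 1" "E1 S_e2 = 1"
    | "E1 S_e1 = 1" "E1 S_e2 = 0" | "E1 S_e1 = 0" "E1 S_e2 = 1"
    using sidempotent_vertex_coords [OF idempotent1] by blast
  then show ?thesis
  proof cases
    case 1
    then have "E1 = szero"
      by (intro sidempotent_radical_eq_szero [OF idempotent1])
    moreover from this have "E2 = sone" "A = szero" "B = szero" "D = szero"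
      using idempotents_sum corner_A corner_B corner_D by (metis sadd_szero(2) smul_szero)+
    ultimately show ?thesis
      using not_generated_by_one_element [of C] by auto
  next
    case 2
    then have "E2 = szero"
      by (intro sidempotent_radical_eq_szero [OF idempotent2]) (simp_all add: E2_eq_sone_minus_E1)
    moreover from this have "E1 = sone" "B = szero" "C = szero" "D = szero"
      using idempotents_sum corner_B corner_C corner_D by (metis sadd_szero(1) smul_szero)+
    ultimately show ?thesis
      using not_generated_by_one_element [of A] by auto
  next
    case 3
    obtain A' B' C' D' where "B_generators p q (sbas S_e1) (sbas S_e2) A' B' C' D'"
      by (rule sconj_to_idempotents [where e = "sbas S_e1" and f = "sbas S_e2", OF _ _ _ refl])
        (simp_all add: sbasis_fun_eq_iff E2_eq_sone_minus_E1 3)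
    then show ?thesis by (rule B_generators_standard_eq)
  next
    case 4
    obtain A' B' C' D' where "B_generators p q (sbas S_e2) (sbas S_e1) A' B' C' D'"
      by (rule sconj_to_idempotents [where e = "sbas S_e2" and f = "sbas S_e1", OF _ _ _ refl])
        (simp_all add: sbasis_fun_eq_iff E2_eq_sone_minus_E1 4)
    then show ?thesis by (rule B_generators_swapped_eq)
  qed
qed

section \<open>From an isomorphism B(q) \<cong> B(p) to generators of S(p)\<close>

definition relator_ab_bc :: "path \<Rightarrow> 'a::field" where
  "relator_ab_bc = (\<lambda>\<pi>. basis_path V1 [Aa, Bb] \<pi> - basis_path V1 [Bb, Cc] \<pi>)"

definition relator_cd_da :: "'a::field \<Rightarrow> path \<Rightarrow> 'a" where
  "relator_cd_da q = (\<lambda>\<pi>. basis_path V2 [Cc, Dd] \<pi> - q * basis_path V2 [Dd, Aa] \<pi>)"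

lemma rel_ideal_eq_genideal: "rel_ideal q = genideal path_alg {relator_ab_bc, relator_cd_da q}"
  by (simp add: rel_ideal_def relator_ab_bc_def relator_cd_da_def)

lemma relators_closed: "{relator_ab_bc, relator_cd_da q} \<subseteq> carrier (path_alg :: (path \<Rightarrow> 'a::field) ring)"
  using kq_diff_scal_closed [OF basis_path_closed basis_path_closed, of V1 "[Aa, Bb]" V1 "[Bb, Cc]" 1]
    kq_diff_scal_closed [OF basis_path_closed basis_path_closed, of V2 "[Cc, Dd]" V2 "[Dd, Aa]" q]
  by (simp add: path_alg_simps relator_ab_bc_def relator_cd_da_def)

lemma ideal_rel_ideal: "ideal (rel_ideal q) (path_alg :: (path \<Rightarrow> 'a::field) ring)"
  unfolding rel_ideal_eq_genideal by (rule ring.genideal_ideal [OF ring_path_alg relators_closed])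

lemma relators_in_rel_ideal: "relator_ab_bc \<in> rel_ideal q" "relator_cd_da q \<in> rel_ideal (q :: 'a::field)"
  using ring.genideal_self [OF ring_path_alg relators_closed [of q]]
  unfolding rel_ideal_eq_genideal by auto

definition sproj :: "'a::field \<Rightarrow> (path \<Rightarrow> 'a) \<Rightarrow> sbasis \<Rightarrow> 'a" where
  "sproj p x = (\<lambda>i. case i of S_e1 \<Rightarrow> x (V1, []) | S_e2 \<Rightarrow> x (V2, []) | S_a \<Rightarrow> x (V1, [Aa])
     | S_b \<Rightarrow> x (V1, [Bb]) | S_c \<Rightarrow> x (V2, [Cc]) | S_d \<Rightarrow> x (V2, [Dd])
     | S_ab \<Rightarrow> x (V1, [Aa, Bb]) + x (V1, [Bb, Cc]) | S_da \<Rightarrow> x (V2, [Dd, Aa]) + p * x (V2, [Cc, Dd]))"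

lemma sproj_apply [simp]:
  "sproj p x S_e1 = x (V1, [])" "sproj p x S_e2 = x (V2, [])" "sproj p x S_a = x (V1, [Aa])"
  "sproj p x S_b = x (V1, [Bb])" "sproj p x S_c = x (V2, [Cc])" "sproj p x S_d = x (V2, [Dd])"
  "sproj p x S_ab = x (V1, [Aa, Bb]) + x (V1, [Bb, Cc])"
  "sproj p x S_da = x (V2, [Dd, Aa]) + p * x (V2, [Cc, Dd])"
  by (simp_all add: sproj_def)

lemma pmul_short_paths:
  "pmul x y (v, []) = x (v, []) * y (v, [])"
  "pmul x y (v, [a]) = x (v, []) * y (v, [a]) + x (v, [a]) * y (tgt a, [])"
  "pmul x y (v, [a, b]) = x (v, []) * y (v, [a, b]) + x (v, [a]) * y (tgt a, [b]) + x (v, [a, b]) * y (tgt b, [])"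
  by (simp_all add: pmul_def atLeast0AtMost atMost_Suc numeral_2_eq_2 algebra_simps)

lemma sproj_pmul: "sproj p (pmul x y) = smul p (sproj p x) (sproj p y)"
  by (simp add: sbasis_fun_eq_iff pmul_short_paths algebra_simps)

lemma sproj_add: "sproj p (\<lambda>\<pi>. x \<pi> + y \<pi>) = sadd (sproj p x) (sproj p y)"
  by (simp add: sbasis_fun_eq_iff algebra_simps)

lemma sproj_scal_pone: "sproj p (scal c pone) = sscale c sone"
  by (simp add: sbasis_fun_eq_iff pone_def scal_def)

lemma sproj_zero: "sproj p (\<lambda>_. 0) = szero"
  by (simp add: sbasis_fun_eq_iff)

lemma sproj_kernel_ideal: "ideal {x \<in> kq_carrier. sproj p x = szero} (path_alg :: (path \<Rightarrow> 'a::field) ring)"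
proof -
  interpret ring "path_alg :: (path \<Rightarrow> 'a) ring" by (rule ring_path_alg)
  let ?K = "{x \<in> kq_carrier. sproj p x = szero}"
  have K_carrier: "?K \<subseteq> carrier path_alg"
    by (auto simp: path_alg_simps)
  have mult_closed: "x \<otimes>\<^bsub>path_alg\<^esub> a \<in> ?K" "a \<otimes>\<^bsub>path_alg\<^esub> x \<in> ?K"
    if "a \<in> ?K" "x \<in> carrier path_alg" for a x
    using that by (simp_all add: path_alg_simps pmul_closed sproj_pmul)
  show ?thesis
  proof (rule idealI [OF ring_path_alg _ mult_closed])
    show "subgroup ?K (add_monoid path_alg)"
    proof
      fix a b assume "a \<in> ?K" "b \<in> ?K"
      then show "a \<otimes>\<^bsub>add_monoid path_alg\<^esub> b \<in> ?K"
        by (simp add: path_alg_simps kq_add_closed sproj_add)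
    next
      show "\<one>\<^bsub>add_monoid path_alg\<^esub> \<in> ?K"
        by (simp add: path_alg_simps kq_zero_closed sproj_zero)
    next
      fix a assume a: "a \<in> ?K"
      with K_carrier have "\<ominus>\<^bsub>path_alg\<^esub> a = (\<ominus>\<^bsub>path_alg\<^esub> \<one>\<^bsub>path_alg\<^esub>) \<otimes>\<^bsub>path_alg\<^esub> a"
        by (auto simp: l_minus)
      also have "\<dots> \<in> ?K"
        using mult_closed a by simp
      finally show "inv\<^bsub>add_monoid path_alg\<^esub> a \<in> ?K"
        by (simp add: a_inv_def)
    qed (use K_carrier in simp)
  qed
qed

lemma sproj_rel_ideal: "x \<in> rel_ideal p \<Longrightarrow> sproj p x = szero"
proof -
  have "sproj p relator_ab_bc = szero" "sproj p (relator_cd_da p) = szero"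
    by (simp_all add: sbasis_fun_eq_iff relator_ab_bc_def relator_cd_da_def basis_path_def)
  then have "rel_ideal p \<subseteq> {x \<in> kq_carrier. sproj p x = szero}"
    unfolding rel_ideal_eq_genideal
    using relators_closed [of p] 
    by (intro ring.genideal_minimal [OF ring_path_alg sproj_kernel_ideal]) (auto simp: path_alg_simps)
  then show "x \<in> rel_ideal p \<Longrightarrow> sproj p x = szero"
    by auto
qed

definition slift :: "(sbasis \<Rightarrow> 'a::field) \<Rightarrow> path \<Rightarrow> 'a" where
  "slift s = (\<lambda>\<pi>. if \<pi> = (V1, []) then s S_e1 else if \<pi> = (V2, []) then s S_e2
     else if \<pi> = (V1, [Aa]) then s S_a else if \<pi> = (V1, [Bb]) then s S_b
     else if \<pi> = (V2, [Cc]) then s S_c else if \<pi> = (V2, [Dd]) then s S_d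
     else if \<pi> = (V1, [Aa, Bb]) then s S_ab else if \<pi> = (V2, [Dd, Aa]) then s S_da else 0)"

lemma slift_closed: "slift s \<in> kq_carrier"
  by (rule kq_carrierI [of "{(V1, []), (V2, []), (V1, [Aa]), (V1, [Bb]), (V2, [Cc]), (V2, [Dd]),
      (V1, [Aa, Bb]), (V2, [Dd, Aa])}"]) (auto simp: slift_def split: if_splits)

lemma sproj_slift: "sproj p (slift s) = s"
  by (simp add: sbasis_fun_eq_iff slift_def)

text \<open>The representative picked by SOME is irrelevant because sproj vanishes on rel_ideal p.\<close>

definition squot :: "'a::field \<Rightarrow> (path \<Rightarrow> 'a) set \<Rightarrow> sbasis \<Rightarrow> 'a" where
  "squot p X = sproj p (SOME y. y \<in> X)"

lemma B_alg_carrier: "carrier (B_alg p) = a_r_coset path_alg (rel_ideal p) ` carrier path_alg"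
  by (auto simp: B_alg_def FactRing_def A_RCOSETS_def')

lemma squot_coset:
  assumes y: "y \<in> carrier path_alg"
  shows "squot p (rel_ideal p +>\<^bsub>path_alg\<^esub> y) = sproj p y"
proof -
  interpret ideal "rel_ideal p" "path_alg :: (path \<Rightarrow> 'a) ring" by (rule ideal_rel_ideal)
  have "sproj p z = sproj p y" if "z \<in> rel_ideal p +>\<^bsub>path_alg\<^esub> y" for z
  proof -
    from that obtain i where i: "i \<in> rel_ideal p" and "z = i \<oplus>\<^bsub>path_alg\<^esub> y"
      unfolding a_r_coset_def' by auto
    then have "z = (\<lambda>\<pi>. i \<pi> + y \<pi>)"
      by (simp add: path_alg_simps)
    with sproj_rel_ideal [OF i] show ?thesis
      by (simp add: sproj_add)
  qed
  moreover have "y \<in> rel_ideal p +>\<^bsub>path_alg\<^esub> y"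
    by (rule a_rcos_self [OF y])
  ultimately show ?thesis
    unfolding squot_def by (metis someI)
qed

lemma squot_mult:
  assumes "X \<in> carrier (B_alg p)" and "Y \<in> carrier (B_alg p)"
  shows "squot p (X \<otimes>\<^bsub>B_alg p\<^esub> Y) = smul p (squot p X) (squot p Y)"
proof -
  interpret ideal "rel_ideal p" "path_alg :: (path \<Rightarrow> 'a) ring" by (rule ideal_rel_ideal)
  from assms obtain x y where x: "x \<in> carrier path_alg" "X = rel_ideal p +>\<^bsub>path_alg\<^esub> x"
    and y: "y \<in> carrier path_alg" "Y = rel_ideal p +>\<^bsub>path_alg\<^esub> y"
    unfolding B_alg_carrier by auto
  have "X \<otimes>\<^bsub>B_alg p\<^esub> Y = rel_ideal p +>\<^bsub>path_alg\<^esub> (pmul x y)"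
    using rcoset_mult_add [OF x(1) y(1)] x(2) y(2) by (simp add: B_alg_def FactRing_def path_alg_simps)
  moreover have "pmul x y \<in> carrier path_alg"
    using x(1) y(1) by (simp add: path_alg_simps pmul_closed)
  ultimately show ?thesis
    using x y by (simp add: squot_coset sproj_pmul)
qed

lemma squot_add:
  assumes "X \<in> carrier (B_alg p)" and "Y \<in> carrier (B_alg p)"
  shows "squot p (X \<oplus>\<^bsub>B_alg p\<^esub> Y) = sadd (squot p X) (squot p Y)"
proof -
  interpret ideal "rel_ideal p" "path_alg :: (path \<Rightarrow> 'a) ring" by (rule ideal_rel_ideal)
  from assms obtain x y where x: "x \<in> carrier path_alg" "X = rel_ideal p +>\<^bsub>path_alg\<^esub> x"
    and y: "y \<in> carrier path_alg" "Y = rel_ideal p +>\<^bsub>path_alg\<^esub> y"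
    unfolding B_alg_carrier by auto
  have "X \<oplus>\<^bsub>B_alg p\<^esub> Y = rel_ideal p +>\<^bsub>path_alg\<^esub> (\<lambda>\<pi>. x \<pi> + y \<pi>)"
    using a_rcos_sum [OF x(1) y(1)] x(2) y(2) by (simp add: B_alg_def FactRing_def path_alg_simps)
  moreover have "(\<lambda>\<pi>. x \<pi> + y \<pi>) \<in> carrier path_alg"
    using x(1) y(1) by (simp add: path_alg_simps kq_add_closed)
  ultimately show ?thesis
    using x y by (simp add: squot_coset sproj_add)
qed

lemma squot_zero: "squot p \<zero>\<^bsub>B_alg p\<^esub> = szero"
proof -
  interpret ideal "rel_ideal p" "path_alg :: (path \<Rightarrow> 'a) ring" by (rule ideal_rel_ideal)
  have "\<zero>\<^bsub>B_alg p\<^esub> = rel_ideal p +>\<^bsub>path_alg\<^esub> \<zero>\<^bsub>path_alg\<^esub>"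
    by (simp add: B_alg_def FactRing_def a_rcos_const)
  then have "squot p \<zero>\<^bsub>B_alg p\<^esub> = sproj p \<zero>\<^bsub>path_alg\<^esub>"
    by (simp add: squot_coset)
  also have "\<dots> = szero"
    by (simp add: path_alg_simps sproj_zero)
  finally show ?thesis .
qed

lemma squot_surj: "\<exists>X\<in>carrier (B_alg p). squot p X = s"
proof
  have "slift s \<in> carrier path_alg"
    by (simp add: path_alg_simps slift_closed)
  then show "rel_ideal p +>\<^bsub>path_alg\<^esub> slift s \<in> carrier (B_alg p)"
    and "squot p (rel_ideal p +>\<^bsub>path_alg\<^esub> slift s) = s"
    by (simp_all add: B_alg_carrier squot_coset sproj_slift)
qed

locale epi_onto_S =
  fixes p q :: "'a::field" and \<psi> :: "(path \<Rightarrow> 'a) \<Rightarrow> sbasis \<Rightarrow> 'a"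
  assumes hom_mult: "x \<in> kq_carrier \<Longrightarrow> y \<in> kq_carrier \<Longrightarrow> \<psi> (pmul x y) = smul p (\<psi> x) (\<psi> y)"
    and hom_add: "x \<in> kq_carrier \<Longrightarrow> y \<in> kq_carrier \<Longrightarrow> \<psi> (\<lambda>\<pi>. x \<pi> + y \<pi>) = sadd (\<psi> x) (\<psi> y)"
    and hom_scalar: "\<psi> (scal c pone) = sscale c sone"
    and kills_rel_ideal: "x \<in> rel_ideal q \<Longrightarrow> \<psi> x = szero"
    and surjective: "\<exists>x\<in>kq_carrier. \<psi> x = s"

lemma epi_onto_S_squot_comp:
  assumes \<phi>_hom: "\<phi> \<in> ring_hom path_alg (B_alg p)"
    and \<phi>_onto: "\<phi> ` carrier path_alg = carrier (B_alg p)"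
    and \<phi>_scalar: "\<And>c. \<phi> (scal c pone) = rel_ideal p +>\<^bsub>path_alg\<^esub> scal c pone"
    and \<phi>_zero: "\<And>x. x \<in> rel_ideal q \<Longrightarrow> \<phi> x = \<zero>\<^bsub>B_alg p\<^esub>"
  shows "epi_onto_S p q (\<lambda>x. squot p (\<phi> x))"
proof unfold_locales
  have \<phi>_carrier: "\<phi> x \<in> carrier (B_alg p)" if "x \<in> kq_carrier" for x
    using ring_hom_closed [OF \<phi>_hom] that by (simp add: path_alg_simps)
  fix x y :: "path \<Rightarrow> 'a" assume xy: "x \<in> kq_carrier" "y \<in> kq_carrier"
  have "\<phi> (pmul x y) = \<phi> x \<otimes>\<^bsub>B_alg p\<^esub> \<phi> y"
    using ring_hom_mult [OF \<phi>_hom, of x y] xy by (simp add: path_alg_simps)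
  with xy show "squot p (\<phi> (pmul x y)) = smul p (squot p (\<phi> x)) (squot p (\<phi> y))"
    by (simp add: squot_mult \<phi>_carrier)
  have "\<phi> (\<lambda>\<pi>. x \<pi> + y \<pi>) = \<phi> x \<oplus>\<^bsub>B_alg p\<^esub> \<phi> y"
    using ring_hom_add [OF \<phi>_hom, of x y] xy by (simp add: path_alg_simps)
  with xy show "squot p (\<phi> (\<lambda>\<pi>. x \<pi> + y \<pi>)) = sadd (squot p (\<phi> x)) (squot p (\<phi> y))"
    by (simp add: squot_add \<phi>_carrier)
next
  fix c :: 'a
  have "scal c pone \<in> carrier path_alg"
    by (simp add: path_alg_simps scal_closed pone_closed)
  then show "squot p (\<phi> (scal c pone)) = sscale c sone"
    by (simp add: \<phi>_scalar squot_coset sproj_scal_pone)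
next
  fix x assume "x \<in> rel_ideal q"
  then show "squot p (\<phi> x) = szero"
    by (simp add: \<phi>_zero squot_zero)
next
  fix s :: "sbasis \<Rightarrow> 'a"
  obtain X where X: "X \<in> carrier (B_alg p)" "squot p X = s"
    using squot_surj by blast
  from X(1) have "X \<in> \<phi> ` carrier path_alg"
    by (simp add: \<phi>_onto)
  then obtain x where "x \<in> carrier path_alg" "\<phi> x = X"
    by blast
  with X show "\<exists>x\<in>kq_carrier. squot p (\<phi> x) = s"
    by (auto simp: path_alg_simps)
qed

lemma kalg_iso_epi_onto_S:
  assumes "kalg_iso q p"
  obtains \<psi> where "epi_onto_S p q \<psi>"
proof -
  obtain h where h: "h \<in> ring_iso (B_alg q) (B_alg p)"
    and h_scalar: "\<And>c. h (rel_ideal q +>\<^bsub>path_alg\<^esub> scal c pone) = rel_ideal p +>\<^bsub>path_alg\<^esub> scal c pone"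
    using assms unfolding kalg_iso_def by blast
  interpret Iq: ideal "rel_ideal q" "path_alg :: (path \<Rightarrow> 'a) ring" by (rule ideal_rel_ideal)
  define \<phi> where "\<phi> = h \<circ> a_r_coset path_alg (rel_ideal q)"
  have \<phi>_hom: "\<phi> \<in> ring_hom path_alg (B_alg p)"
    unfolding \<phi>_def
    by (rule ring_hom_trans [OF Iq.rcos_ring_hom]) (use h in \<open>simp add: ring_iso_def B_alg_def\<close>)
  have "\<phi> ` carrier path_alg = h ` (a_r_coset path_alg (rel_ideal q) ` carrier path_alg)"
    by (simp add: \<phi>_def image_comp)
  then have \<phi>_onto: "\<phi> ` carrier path_alg = carrier (B_alg p)"
    using h by (simp add: B_alg_carrier [symmetric] ring_iso_def bij_betw_def)
  have \<phi>_zero: "\<phi> x = \<zero>\<^bsub>B_alg p\<^esub>" if "x \<in> rel_ideal q" for x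
  proof -
    have "ring (B_alg q)" "ring (B_alg p)"
      using Iq.quotient_is_ring ideal.quotient_is_ring [OF ideal_rel_ideal]
      by (simp_all add: B_alg_def)
    with h have "h \<zero>\<^bsub>B_alg q\<^esub> = \<zero>\<^bsub>B_alg p\<^esub>"
      by (simp add: ring_iso_def ring_hom_zero)
    with that show ?thesis
      by (simp add: \<phi>_def Iq.a_rcos_const B_alg_def FactRing_def)
  qed
  have "epi_onto_S p q (\<lambda>x. squot p (\<phi> x))"
    by (rule epi_onto_S_squot_comp [OF \<phi>_hom \<phi>_onto _ \<phi>_zero]) (simp add: \<phi>_def h_scalar)
  then show thesis
    by (rule that)
qed

context epi_onto_S
begin

lemma hom_zero: "\<psi> (\<lambda>_. 0) = szero"
  using hom_scalar [of 0] by (simp add: scal_def sbasis_fun_eq_iff)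

lemma hom_scal: "x \<in> kq_carrier \<Longrightarrow> \<psi> (scal c x) = sscale c (\<psi> x)"
  using hom_mult [OF scal_closed [OF pone_closed]] by (simp add: scal_pmul hom_scalar smul_sscale_left)

lemma hom_mult_basis_path:
  assumes "valid_path v xs" and "valid_path w ys"
  shows "smul p (\<psi> (basis_path v xs)) (\<psi> (basis_path w ys)) =
    (if w = end_vert v xs then \<psi> (basis_path v (xs @ ys)) else szero)"
  using hom_mult [OF basis_path_closed basis_path_closed, OF assms]
  by (cases "w = end_vert v xs") (simp_all add: pmul_basis_path hom_zero)

lemma hom_relation_ab_bc: "\<psi> (basis_path V1 [Aa, Bb]) = \<psi> (basis_path V1 [Bb, Cc])"
proof -
  have relator: "(relator_ab_bc :: path \<Rightarrow> 'a) \<in> kq_carrier"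
    using relators_closed [of q] by (simp add: path_alg_simps)
  have "\<psi> (basis_path V1 [Aa, Bb]) = \<psi> (\<lambda>\<pi>. relator_ab_bc \<pi> + basis_path V1 [Bb, Cc] \<pi>)"
    by (simp add: relator_ab_bc_def)
  also have "\<dots> = \<psi> (basis_path V1 [Bb, Cc])"
    using hom_add [OF relator basis_path_closed] kills_rel_ideal [OF relators_in_rel_ideal(1)]
    by simp
  finally show ?thesis .
qed

lemma hom_relation_cd_da: "\<psi> (basis_path V2 [Cc, Dd]) = sscale q (\<psi> (basis_path V2 [Dd, Aa]))"
proof -
  have relator: "relator_cd_da q \<in> kq_carrier"
    using relators_closed [of q] by (simp add: path_alg_simps)
  have "\<psi> (basis_path V2 [Cc, Dd]) = \<psi> (\<lambda>\<pi>. relator_cd_da q \<pi> + scal q (basis_path V2 [Dd, Aa]) \<pi>)"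
    by (simp add: relator_cd_da_def scal_def)
  also have "\<dots> = sscale q (\<psi> (basis_path V2 [Dd, Aa]))"
    using hom_add [OF relator scal_closed [OF basis_path_closed]] kills_rel_ideal [OF relators_in_rel_ideal(2)]
    by (simp add: hom_scal basis_path_closed)
  finally show ?thesis .
qed

lemma hom_in_ssubalg:
  assumes T: "ssubalg p T"
    and gens: "\<And>v. \<psi> (basis_path v []) \<in> T" "\<And>a. \<psi> (basis_path (src a) [a]) \<in> T"
    and x: "x \<in> kq_carrier"
  shows "\<psi> x \<in> T"
  using x
proof (induction rule: kq_carrier_induct)
  case (scalar c)
  show ?case using T unfolding ssubalg_def hom_scalar by blast
next
  case (vertex v)
  show ?case by (rule gens(1))
next
  case (arrow a)
  show ?case by (rule gens(2))
next
  case (add x y)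
  then show ?case using T by (simp add: ssubalg_def hom_add del: sadd_apply)
next
  case (mult x y)
  then show ?case using T by (simp add: ssubalg_def hom_mult)
qed

lemma B_generators:
  "B_generators p q (\<psi> (basis_path V1 [])) (\<psi> (basis_path V2 [])) (\<psi> (basis_path V1 [Aa]))
     (\<psi> (basis_path V1 [Bb])) (\<psi> (basis_path V2 [Cc])) (\<psi> (basis_path V2 [Dd]))"
proof unfold_locales
  have "\<psi> pone = sone"
    using hom_scalar [of 1] by (simp add: scal_def sbasis_fun_eq_iff)
  then show "sadd (\<psi> (basis_path V1 [])) (\<psi> (basis_path V2 [])) = sone"
    using hom_add [OF basis_path_closed basis_path_closed, of V1 "[]" V2 "[]"]
    by (simp add: pone_eq_sum_vertices)
  fix T Z
  assume T: "ssubalg p T" and gens: "{\<psi> (basis_path V1 []), \<psi> (basis_path V2 []), \<psi> (basis_path V1 [Aa]),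
     \<psi> (basis_path V1 [Bb]), \<psi> (basis_path V2 [Cc]), \<psi> (basis_path V2 [Dd])} \<subseteq> T"
  obtain x where x: "x \<in> kq_carrier" and Z: "\<psi> x = Z"
    using surjective by blast
  have "\<psi> x \<in> T"
  proof (rule hom_in_ssubalg [OF T _ _ x])
    show "\<psi> (basis_path v []) \<in> T" for v
      using gens by (cases v) simp_all
    show "\<psi> (basis_path (src a) [a]) \<in> T" for a
      using gens by (cases a) simp_all
  qed
  with Z show "Z \<in> T" by simp
qed (simp_all add: hom_mult_basis_path hom_relation_ab_bc hom_relation_cd_da)

end

theorem corollary2p11:
  fixes p q :: "'a::field_char_0"
  assumes "alg_closed_field TYPE('a)"
    and "p \<noteq> 0" and "q \<noteq> 0"
    and "kalg_iso q p"
  shows "p = q"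
proof -
  obtain \<psi> where "epi_onto_S p q \<psi>"
    using kalg_iso_epi_onto_S [OF assms(4)] .
  then interpret epi_onto_S p q \<psi> .
  from B_generators show ?thesis
    by (rule B_generators.parameters_eq)
qed

end
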